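(* Let $K$, $\varphi$, $B$ be as below, let $\mu_0\in\mathcal M_B$ with $\mu_0\ge0$, $\lambda_0\ge0$, and let $(\mu_t,\lambda_t)_{t\ge0}$ be the unique solution of $(\mu_t,\lambda_t)=(\mu_0,\lambda_0)+\int_0^tL^B(\mu_s,\lambda_s)ds$. Then for every $t\ge0$, $\mu_t$ is absolutely continuous with respect to $\gamma_0=\sum_{k=1}^\infty\mu_0^{*k}$, where $\mu_0^{*k}$ is the $k$-fold convolution power of $\mu_0$.
   Context: $E=(0,\infty)$. $K:E\times E\to[0,\infty)$ symmetric measurable, $\varphi:E\to(0,\infty)$ continuous sublinear ($\varphi(\lambda x)\le\lambda\varphi(x)$ for $\lambda\ge1$), $K(x,y)\le\varphi(x)\varphi(y)$. $B\subseteq E$ compact; $\mathcal M_B$ the finite signed measures supported on $B$. With $\langle(f,a),(\mu,\lambda)\rangle=\int f\,d\mu+a\lambda$, $L^B$ is defined by $$\langle(f,a),L^B(\mu,\lambda)\rangle=\tfrac12\int_{E\times E}\{f(x+y)1_{x+y\in B}+a\varphi(x+y)1_{x+y\notin B}-f(x)-f(y)\}K(x,y)\mu(dx)\mu(dy)+\lambda\int_E\{a\varphi(x)-f(x)\}\varphi(x)\mu(dx).$$ A solution is a continuous map $[0,\infty)\to\mathcal M_B\times\mathbb R$ satisfying the integral equation; existence and uniqueness of the solution for such data is known. *)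

theory Defs
  imports "HOL-Analysis.Analysis" "HOL-Probability.Convolution"
begin

text \<open>A finite signed measure on the real line is represented by a pair (P, N)
  of finite (positive) Borel measures, standing for P - N. It lies in M_B
  if both parts are supported on B.\<close>

definition in_MB :: "real set \<Rightarrow> real measure \<Rightarrow> real measure \<Rightarrow> bool" where
  "in_MB B P N \<longleftrightarrow> finite_measure P \<and> finite_measure N \<and>
     sets P = sets borel \<and> sets N = sets borel \<and>
     emeasure P (- B) = 0 \<and> emeasure N (- B) = 0"

definition sint :: "real measure \<Rightarrow> real measure \<Rightarrow> (real \<Rightarrow> real) \<Rightarrow> real" where
  "sint P N f = (\<integral>x. f x \<partial>P) - (\<integral>x. f x \<partial>N)"

definition sint2 :: "real measure \<Rightarrow> real measure \<Rightarrow> (real \<Rightarrow> real \<Rightarrow> real) \<Rightarrow> real" where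
  "sint2 P N g = sint P N (\<lambda>y. sint P N (\<lambda>x. g x y))"

text \<open>The pairing < (f,a), L^B(mu,lam) > with mu = P - N.\<close>
definition LB_pair ::
  "(real \<Rightarrow> real \<Rightarrow> real) \<Rightarrow> (real \<Rightarrow> real) \<Rightarrow> real set \<Rightarrow> (real \<Rightarrow> real) \<Rightarrow> real
   \<Rightarrow> real measure \<Rightarrow> real measure \<Rightarrow> real \<Rightarrow> real" where
  "LB_pair K \<phi> B f a P N lam =
     1/2 * sint2 P N (\<lambda>x y. (f (x + y) * indicator B (x + y)
                              + a * \<phi> (x + y) * indicator (- B) (x + y)
                              - f x - f y) * K x y)
     + lam * sint P N (\<lambda>x. (a * \<phi> x - f x) * \<phi> x)"

text \<open>Continuity of t \<mapsto> (mu_t, lam_t) on [0,\<infinity>) in total variation norm times R: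
  the total variation norm of mu is sup over measurable |f| \<le> 1 of |\<integral> f d mu|.\<close>
definition tv_continuous ::
  "(real \<Rightarrow> real measure) \<Rightarrow> (real \<Rightarrow> real measure) \<Rightarrow> (real \<Rightarrow> real) \<Rightarrow> bool" where
  "tv_continuous P N lam \<longleftrightarrow>
     (\<forall>t\<ge>0. \<forall>\<epsilon>>0. \<exists>\<delta>>0. \<forall>s\<ge>0. \<bar>s - t\<bar> < \<delta> \<longrightarrow>
        \<bar>lam s - lam t\<bar> < \<epsilon> \<and>
        (\<forall>f \<in> borel_measurable borel. (\<forall>x. \<bar>f x\<bar> \<le> 1) \<longrightarrow>
            \<bar>sint (P s) (N s) f - sint (P t) (N t) f\<bar> \<le> \<epsilon>))"

fun conv_pow :: "real measure \<Rightarrow> nat \<Rightarrow> real measure" where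
  "conv_pow M 0 = return borel 0"
| "conv_pow M (Suc n) = convolution M (conv_pow M n)"

definition gamma0 :: "real measure \<Rightarrow> real measure" where
  "gamma0 M = measure_of UNIV (sets borel) (\<lambda>A. \<Sum>k. emeasure (conv_pow M (Suc k)) A)"

definition signed_abs_cont :: "real measure \<Rightarrow> real measure \<Rightarrow> real measure \<Rightarrow> bool" where
  "signed_abs_cont G P N \<longleftrightarrow> (\<forall>A \<in> null_sets G. measure P A - measure N A = 0)"

end

theory Submission
  imports Defs
begin

text \<open>Let g(t) be the variation of \<mu>_t on \<gamma>0-null sets, i.e. the supremum of
  \<bar>\<integral> f d\<mu>_t\<bar> over measurable f with \<bar>f\<bar> \<le> 1 vanishing outside a \<gamma>0-null set.
  Testing the equation with (f, 0) for such f, the initial term drops out because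
  \<mu>0 \<le> \<gamma>0, and the generator is bounded by C g(s) on [0, T]. For the gain term
  f(x + y) two facts are used: the \<gamma>0-null sets are almost translation invariant
  (A - y is \<gamma>0-null for \<gamma>0-almost every y, because the convolution powers of \<mu>0
  form a semigroup), and the part of \<mu>_t carried by \<gamma>0-null sets lives on a single
  \<gamma>0-null set. Hence g(t) \<le> C \<integral>_0^t g(s) ds, and iterating this bound gives g = 0.\<close>

lemma
  assumes "finite_measure M" "sets M = sets borel"
  shows finite_measure_conv_pow: "finite_measure (conv_pow M n)"
    and sets_conv_pow: "sets (conv_pow M n) = sets borel"
proof -
  have "finite_measure (conv_pow M n) \<and> sets (conv_pow M n) = sets borel"
    using assms by (induction n) (auto simp: prob_space.finite_measure[OF prob_space_return]
        convolution_finite)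
  then show "finite_measure (conv_pow M n)" "sets (conv_pow M n) = sets borel" by auto
qed

lemma convolution_return_zero:
  assumes "finite_measure M" "sets M = sets borel"
  shows "(M \<star> return borel (0::real)) = M"
proof (rule measure_eqI)
  show "sets (M \<star> return borel 0) = sets M" using assms by simp
  fix A assume "A \<in> sets (M \<star> return borel (0::real))"
  then have A: "A \<in> sets borel" by simp
  have "emeasure (M \<star> return borel 0) A = \<integral>\<^sup>+x. \<integral>\<^sup>+y. indicator A (x + y) \<partial>return borel 0 \<partial>M"
    using assms A
    by (intro convolution_emeasure') (auto simp: prob_space.finite_measure[OF prob_space_return])
  also have "\<dots> = emeasure M A"
    using assms A by (simp add: nn_integral_return)
  finally show "emeasure (M \<star> return borel 0) A = emeasure M A" .
qed

lemma conv_pow_Suc_add: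
  assumes "finite_measure M" "sets M = sets borel"
  shows "(conv_pow M (Suc j) \<star> conv_pow M n) = conv_pow M (Suc j + n)"
proof (induction j)
  case 0
  show ?case
    using assms by (simp add: convolution_commutative convolution_return_zero
        finite_measure_conv_pow sets_conv_pow)
next
  case (Suc j)
  have "(conv_pow M (Suc (Suc j)) \<star> conv_pow M n) = (M \<star> (conv_pow M (Suc j) \<star> conv_pow M n))"
    using assms
    by (simp add: convolution_associative convolution_finite finite_measure_conv_pow sets_conv_pow)
  then show ?case using Suc by simp
qed

lemma sets_gamma0: "sets (gamma0 M) = sets borel"
  using sets.sigma_sets_eq[of borel] by (simp add: gamma0_def)

lemma emeasure_gamma0:
  assumes "finite_measure M" "sets M = sets borel" "A \<in> sets borel"
  shows "emeasure (gamma0 M) A = (\<Sum>k. emeasure (conv_pow M (Suc k)) A)"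
  unfolding gamma0_def
proof (rule emeasure_measure_of_sigma)
  show "sigma_algebra UNIV (sets (borel::real measure))"
    using sets.sigma_algebra_axioms[of "borel::real measure"] by simp
  show "positive (sets borel) (\<lambda>A. \<Sum>k. emeasure (conv_pow M (Suc k)) A)"
    by (simp add: positive_def)
  show "countably_additive (sets borel) (\<lambda>A. \<Sum>k. emeasure (conv_pow M (Suc k)) A)"
    unfolding countably_additive_def
  proof (intro allI impI)
    fix F :: "nat \<Rightarrow> real set"
    assume F: "range F \<subseteq> sets borel" "disjoint_family F" "\<Union> (range F) \<in> sets borel"
    have "(\<Sum>i. \<Sum>k. emeasure (conv_pow M (Suc k)) (F i))
        = (\<Sum>i. \<integral>\<^sup>+k. emeasure (conv_pow M (Suc k)) (F i) \<partial>count_space UNIV)"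
      by (simp add: nn_integral_count_space_nat)
    also have "\<dots> = (\<integral>\<^sup>+k. (\<Sum>i. emeasure (conv_pow M (Suc k)) (F i)) \<partial>count_space UNIV)"
      by (rule nn_integral_suminf[symmetric]) simp
    also have "\<dots> = (\<Sum>k. \<Sum>i. emeasure (conv_pow M (Suc k)) (F i))"
      by (simp add: nn_integral_count_space_nat)
    also have "\<dots> = (\<Sum>k. emeasure (conv_pow M (Suc k)) (\<Union> (range F)))"
      using F assms by (simp add: suminf_emeasure sets_conv_pow)
    finally show "(\<Sum>i. \<Sum>k. emeasure (conv_pow M (Suc k)) (F i))
      = (\<Sum>k. emeasure (conv_pow M (Suc k)) (\<Union> (range F)))" .
  qed
qed fact

lemma null_sets_gamma0_iff:
  assumes "finite_measure M" "sets M = sets borel"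
  shows "A \<in> null_sets (gamma0 M) \<longleftrightarrow> A \<in> sets borel \<and> (\<forall>k. emeasure (conv_pow M (Suc k)) A = 0)"
  using assms
  by (auto simp: null_sets_def sets_gamma0 emeasure_gamma0 suminf_eq_zero_iff[OF summableI])

lemma borel_measurable_emeasure_translate:
  fixes M :: "real measure"
  assumes "finite_measure M" "sets M = sets borel" "A \<in> sets borel"
  shows "(\<lambda>y. emeasure M {x. x + y \<in> A}) \<in> borel_measurable borel"
proof -
  interpret finite_measure M by fact
  have "(\<lambda>(y, x). indicator A (x + y) :: ennreal) \<in> borel_measurable (borel \<Otimes>\<^sub>M M)"
    unfolding measurable_cong_sets[OF sets_pair_measure_cong[OF refl assms(2)] refl]
    using assms(3) by measurable
  then have "(\<lambda>y. \<integral>\<^sup>+x. indicator A (x + y) \<partial>M) \<in> borel_measurable borel"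
    using borel_measurable_nn_integral_fst by simp
  moreover have "(\<integral>\<^sup>+x. indicator A (x + y) \<partial>M) = emeasure M {x. x + y \<in> A}" for y
  proof -
    have "{x. x + y \<in> A} \<in> sets M" unfolding assms(2) using assms(3) by measurable
    then show ?thesis by (simp flip: nn_integral_indicator add: indicator_def)
  qed
  ultimately show ?thesis by simp
qed

lemma null_sets_gamma0_translate:
  assumes M: "finite_measure M" "sets M = sets borel" and A: "A \<in> null_sets (gamma0 M)"
  shows "{y. {x. x + y \<in> A} \<notin> null_sets (gamma0 M)} \<in> null_sets (gamma0 M)"
proof -
  have [measurable]: "A \<in> sets borel" using null_setsD2[OF A] by (simp add: sets_gamma0)
  define \<psi> where "\<psi> k y = emeasure (conv_pow M (Suc k)) {x. x + y \<in> A}" for k y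
  have \<psi>_meas [measurable]: "\<psi> k \<in> borel_measurable borel" for k
    unfolding \<psi>_def
    by (intro borel_measurable_emeasure_translate finite_measure_conv_pow sets_conv_pow M) simp
  have "{y. \<psi> k y \<noteq> 0} \<in> null_sets (gamma0 M)" for k
    unfolding null_sets_gamma0_iff[OF M]
  proof (intro conjI allI)
    show "{y. \<psi> k y \<noteq> 0} \<in> sets borel" by measurable
    fix j
    have "(\<integral>\<^sup>+y. \<psi> k y \<partial>conv_pow M (Suc j)) = emeasure (conv_pow M (Suc j) \<star> conv_pow M (Suc k)) A"
      unfolding \<psi>_def using sets_eq_imp_space_eq[OF sets_conv_pow[OF M]]
      by (intro convolution_emeasure[symmetric] finite_measure_conv_pow sets_conv_pow M) auto
    also have "\<dots> = 0"
      using A M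
      by (simp add: conv_pow_Suc_add null_sets_gamma0_iff del: add_Suc_right conv_pow.simps)
    finally show "emeasure (conv_pow M (Suc j)) {y. \<psi> k y \<noteq> 0} = 0"
      using \<psi>_meas[of k] sets_eq_imp_space_eq[OF sets_conv_pow[OF M]]
      by (subst (asm) nn_integral_0_iff) (auto simp: measurable_cong_sets[OF sets_conv_pow[OF M]])
  qed
  moreover have "{y. {x. x + y \<in> A} \<notin> null_sets (gamma0 M)} = (\<Union>k. {y. \<psi> k y \<noteq> 0})"
    by (auto simp: \<psi>_def null_sets_gamma0_iff[OF M])
  ultimately show ?thesis by auto
qed

lemma null_sets_gamma0_imp_null_sets:
  assumes "finite_measure M" "sets M = sets borel" "A \<in> null_sets (gamma0 M)"
  shows "A \<in> null_sets M"
proof -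
  have "emeasure (conv_pow M (Suc 0)) A = 0" "A \<in> sets borel"
    using assms(3) unfolding null_sets_gamma0_iff[OF assms(1,2)] by blast+
  then show ?thesis using assms(1,2) by (simp add: convolution_return_zero null_sets_def)
qed

lemma singular_support_exists:
  assumes "finite_measure M" "sets G = sets M"
  obtains D where "D \<in> null_sets G" "\<And>E. E \<in> null_sets G \<Longrightarrow> E - D \<in> null_sets M"
proof -
  interpret finite_measure M by fact
  have null_sets_sets: "F \<in> sets M" if "F \<in> null_sets G" for F
    using that assms(2) by auto
  have "{} \<in> null_sets G" by auto
  then have "null_sets G \<noteq> {}" by blast
  from ennreal_SUP_countable_SUP[OF this, of "emeasure M"] obtain Q :: "nat \<Rightarrow> ennreal"
    where Q: "range Q \<subseteq> emeasure M ` null_sets G"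
      and sup: "(SUP E\<in>null_sets G. emeasure M E) = (SUP i. Q i)"
    by blast
  then have "\<forall>i. \<exists>E. E \<in> null_sets G \<and> Q i = emeasure M E"
    by (metis image_iff range_subsetD)
  then obtain E where E: "\<And>i. E i \<in> null_sets G" "\<And>i. Q i = emeasure M (E i)"
    by metis
  \<comment> \<open>null_sets G is closed under countable unions, so the supremum is attained.\<close>
  define D where "D = (\<Union>i. E i)"
  have D: "D \<in> null_sets G" unfolding D_def using E(1) by blast
  have maximal: "emeasure M F \<le> emeasure M D" if "F \<in> null_sets G" for F
  proof -
    have "emeasure M F \<le> (SUP E\<in>null_sets G. emeasure M E)" by (rule SUP_upper[OF that])
    also have "\<dots> = (SUP i. emeasure M (E i))" unfolding sup E(2) ..
    also have "\<dots> \<le> emeasure M D"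
      using D null_sets_sets by (intro SUP_least emeasure_mono) (auto simp: D_def)
    finally show ?thesis .
  qed
  show ?thesis
  proof (rule that[OF D])
    fix F assume F: "F \<in> null_sets G"
    have "emeasure M D + emeasure M (F - D) = emeasure M (D \<union> F)"
      using null_sets_sets[OF F] null_sets_sets[OF D]
      by (subst plus_emeasure) (auto simp: Un_Diff_cancel)
    also have "\<dots> \<le> emeasure M D" using F D by (intro maximal) blast
    finally have "measure M D + measure M (F - D) \<le> measure M D"
      by (simp add: emeasure_eq_measure flip: ennreal_plus)
    then have "measure M (F - D) = 0" using measure_nonneg[of M "F - D"] by linarith
    then show "F - D \<in> null_sets M"
      using null_sets_sets[OF F] null_sets_sets[OF D]
      by (simp add: null_sets_def emeasure_eq_measure)
  qed
qed

lemma
  assumes "in_MB B P N"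
  shows in_MB_finite_measure: "finite_measure P" "finite_measure N"
    and in_MB_sets: "sets P = sets borel" "sets N = sets borel"
    and in_MB_measurable:
      "measurable P X = measurable borel X" "measurable N X = measurable borel X"
  using assms by (auto simp: in_MB_def intro!: measurable_cong_sets)

lemma in_MB_AE:
  assumes "in_MB B P N" "B \<in> sets borel"
  shows "AE x in P. x \<in> B" "AE x in N. x \<in> B"
proof -
  have "- B \<in> null_sets P" "- B \<in> null_sets N"
    using assms by (auto simp: in_MB_def null_sets_def)
  then show "AE x in P. x \<in> B" "AE x in N. x \<in> B"
    by (auto dest: AE_not_in)
qed

lemma in_MB_integrable:
  fixes h :: "real \<Rightarrow> real"
  assumes "in_MB B P N" "B \<in> sets borel" "h \<in> borel_measurable borel"
    and "\<And>x. x \<in> B \<Longrightarrow> \<bar>h x\<bar> \<le> c"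
  shows "integrable P h" "integrable N h"
proof -
  have "AE x in P. norm (h x) \<le> c" "AE x in N. norm (h x) \<le> c"
    using in_MB_AE[OF assms(1,2)] by (auto elim!: eventually_mono simp: assms(4))
  then show "integrable P h" "integrable N h"
    using assms(3) in_MB_finite_measure[OF assms(1)]
    by (auto intro!: finite_measure.integrable_const_bound[where B=c]
        simp: in_MB_measurable[OF assms(1)])
qed

lemma sint_nonmeasurable:
  assumes "in_MB B P N" "h \<notin> borel_measurable borel"
  shows "sint P N h = 0"
proof -
  have "\<not> integrable P h" "\<not> integrable N h"
    using assms by (auto dest: borel_measurable_integrable simp: in_MB_measurable[OF assms(1)])
  then show ?thesis by (simp add: sint_def not_integrable_integral_eq)
qed

lemma sint_cong_support:
  fixes h h' :: "real \<Rightarrow> real"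
  assumes "in_MB B P N" "B \<in> sets borel" "h \<in> borel_measurable borel" "h' \<in> borel_measurable borel"
    and "\<And>x. x \<in> B \<Longrightarrow> h x = h' x"
  shows "sint P N h = sint P N h'"
proof -
  have "(\<integral>x. h x \<partial>P) = (\<integral>x. h' x \<partial>P)" "(\<integral>x. h x \<partial>N) = (\<integral>x. h' x \<partial>N)"
    using in_MB_AE[OF assms(1,2)] assms(3-5)
    by (auto intro!: integral_cong_AE elim!: eventually_mono simp: in_MB_measurable[OF assms(1)])
  then show ?thesis by (simp add: sint_def)
qed

lemma sint_cmult: "sint P N (\<lambda>x. c * f x) = c * sint P N f"
  by (simp add: sint_def algebra_simps)

definition variation_on :: "real measure \<Rightarrow> real measure \<Rightarrow> real set set \<Rightarrow> real" where
  "variation_on P N \<A> = Sup {\<bar>sint P N f\<bar> | f. f \<in> borel_measurable borel \<and> (\<forall>x. \<bar>f x\<bar> \<le> 1) \<and>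
     (\<exists>A\<in>\<A>. \<forall>x. x \<notin> A \<longrightarrow> f x = 0)}"

abbreviation tv_norm :: "real measure \<Rightarrow> real measure \<Rightarrow> real" where
  "tv_norm P N \<equiv> variation_on P N {UNIV}"

lemma abs_sint_le_variation_on:
  assumes "in_MB B P N" "f \<in> borel_measurable borel" "\<And>x. \<bar>f x\<bar> \<le> 1"
    and "A \<in> \<A>" "\<And>x. x \<notin> A \<Longrightarrow> f x = 0"
  shows "\<bar>sint P N f\<bar> \<le> variation_on P N \<A>"
  unfolding variation_on_def
proof (rule cSup_upper)
  interpret P: finite_measure P by (rule in_MB_finite_measure(1)[OF assms(1)])
  interpret N: finite_measure N by (rule in_MB_finite_measure(2)[OF assms(1)])
  have "\<bar>sint P N g\<bar> \<le> measure P UNIV + measure N UNIV"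
    if "g \<in> borel_measurable borel" "\<forall>x. \<bar>g x\<bar> \<le> 1" for g
  proof -
    have "integrable P g" "integrable N g"
      using that
      by (auto intro!: P.integrable_const_bound[where B=1] N.integrable_const_bound[where B=1]
          simp: in_MB_measurable[OF assms(1)])
    then have "\<bar>\<integral>x. g x \<partial>P\<bar> \<le> measure P (space P)" "\<bar>\<integral>x. g x \<partial>N\<bar> \<le> measure N (space N)"
      using that integral_abs_bound_integral[of P g "\<lambda>_. 1"]
        integral_abs_bound_integral[of N g "\<lambda>_. 1"]
      by auto
    then have "\<bar>\<integral>x. g x \<partial>P\<bar> \<le> measure P UNIV" "\<bar>\<integral>x. g x \<partial>N\<bar> \<le> measure N UNIV"
      using sets_eq_imp_space_eq[OF in_MB_sets(1)[OF assms(1)]]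
        sets_eq_imp_space_eq[OF in_MB_sets(2)[OF assms(1)]] by auto
    then show ?thesis by (simp add: sint_def)
  qed
  then show "bdd_above {\<bar>sint P N f\<bar> | f. f \<in> borel_measurable borel \<and> (\<forall>x. \<bar>f x\<bar> \<le> 1) \<and>
     (\<exists>A\<in>\<A>. \<forall>x. x \<notin> A \<longrightarrow> f x = 0)}"
    by (intro bdd_aboveI[where M="measure P UNIV + measure N UNIV"]) blast
qed (use assms in blast)

lemma variation_on_nonneg:
  assumes "in_MB B P N" "\<A> \<noteq> {}"
  shows "0 \<le> variation_on P N \<A>"
proof -
  obtain A where "A \<in> \<A>" using assms(2) by blast
  with abs_sint_le_variation_on[OF assms(1), of "\<lambda>x. 0"] show ?thesis
    by (simp add: sint_def)
qed

lemma variation_on_least: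
  assumes "\<A> \<noteq> {}"
    and "\<And>f A. f \<in> borel_measurable borel \<Longrightarrow> (\<And>x. \<bar>f x\<bar> \<le> 1) \<Longrightarrow> A \<in> \<A> \<Longrightarrow>
      (\<And>x. x \<notin> A \<Longrightarrow> f x = 0) \<Longrightarrow> \<bar>sint P N f\<bar> \<le> c"
  shows "variation_on P N \<A> \<le> c"
  unfolding variation_on_def
proof (rule cSup_least)
  obtain A where "A \<in> \<A>" using assms(1) by blast
  then show "{\<bar>sint P N f\<bar> | f. f \<in> borel_measurable borel \<and> (\<forall>x. \<bar>f x\<bar> \<le> 1) \<and>
     (\<exists>A\<in>\<A>. \<forall>x. x \<notin> A \<longrightarrow> f x = 0)} \<noteq> {}"
    by (intro ex_in_conv[THEN iffD1] exI[of _ "\<bar>sint P N (\<lambda>x. 0)\<bar>"]) auto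
qed (use assms(2) in blast)

lemma variation_on_le_tv_norm:
  assumes "in_MB B P N" "\<A> \<noteq> {}"
  shows "variation_on P N \<A> \<le> tv_norm P N"
  using assms by (intro variation_on_least abs_sint_le_variation_on[of B P N]) auto

lemma abs_sint_le_scaled_variation_on:
  fixes h :: "real \<Rightarrow> real"
  assumes MB: "in_MB B P N" "B \<in> sets borel"
    and "A \<in> \<A>" "\<And>x. x \<notin> A \<Longrightarrow> h x = 0" "\<And>x. x \<in> B \<Longrightarrow> \<bar>h x\<bar> \<le> c" "0 \<le> c"
  shows "\<bar>sint P N h\<bar> \<le> c * variation_on P N \<A>"
proof (cases "h \<in> borel_measurable borel \<and> c \<noteq> 0")
  case False
  have "sint P N h = 0"
  proof (cases "h \<in> borel_measurable borel")
    case True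
    then have "sint P N h = sint P N (\<lambda>x. 0)"
      using False MB assms(5) by (intro sint_cong_support) auto
    then show ?thesis by (simp add: sint_def)
  qed (rule sint_nonmeasurable[OF MB(1)])
  moreover have "0 \<le> variation_on P N \<A>" using variation_on_nonneg[OF MB(1)] assms(3) by blast
  ultimately show ?thesis using assms(6) by simp
next
  case True
  then have [measurable]: "h \<in> borel_measurable borel" by simp
  note [measurable] = MB(2)
  define f where "f x = h x * indicator B x / c" for x
  have "\<bar>sint P N f\<bar> \<le> variation_on P N \<A>"
  proof (rule abs_sint_le_variation_on[OF MB(1) _ _ assms(3)])
    show "f \<in> borel_measurable borel" unfolding f_def by measurable
    show "\<bar>f x\<bar> \<le> 1" for x
      using assms(5,6) True by (auto simp: f_def indicator_def abs_divide divide_le_eq_1)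
    show "f x = 0" if "x \<notin> A" for x using assms(4)[OF that] by (simp add: f_def)
  qed
  moreover have "sint P N h = c * sint P N f"
    using True MB unfolding sint_cmult[symmetric]
    by (intro sint_cong_support) (auto simp: f_def)
  ultimately show ?thesis using assms(6) by (simp add: abs_mult mult_left_mono)
qed

lemma signed_abs_cont_if_null_variation_zero:
  assumes "in_MB B P N" "sets G = sets borel" "variation_on P N (null_sets G) = 0"
  shows "signed_abs_cont G P N"
  unfolding signed_abs_cont_def
proof
  fix A assume A: "A \<in> null_sets G"
  then have "A \<in> sets borel" using assms(2) by auto
  then have "\<bar>sint P N (indicator A)\<bar> \<le> variation_on P N (null_sets G)"
    using A by (intro abs_sint_le_variation_on[OF assms(1), of _ A]) (auto simp: indicator_def)
  then have "\<bar>sint P N (indicator A)\<bar> \<le> 0" using assms(3) by simp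
  moreover have "sint P N (indicator A) = measure P A - measure N A"
    using A assms(1,2) in_MB_finite_measure[OF assms(1)] in_MB_sets[OF assms(1)]
    by (auto simp: sint_def finite_measure.emeasure_eq_measure)
  ultimately show "measure P A - measure N A = 0" by simp
qed

lemma abs_sint_le_split:
  fixes h :: "real \<Rightarrow> real"
  assumes MB: "in_MB B P N" "B \<in> sets borel" and D: "D \<in> sets borel"
    and bounded: "\<And>x. x \<in> B \<Longrightarrow> \<bar>h x\<bar> \<le> c"
    and "\<bar>sint P N (\<lambda>x. h x * indicator D x)\<bar> \<le> a" "\<bar>sint P N (\<lambda>x. h x * indicator (- D) x)\<bar> \<le> b"
    and "0 \<le> a" "0 \<le> b"
  shows "\<bar>sint P N h\<bar> \<le> a + b"
proof (cases "h \<in> borel_measurable borel")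
  case False
  then show ?thesis using sint_nonmeasurable[OF MB(1)] assms(7,8) by simp
next
  case True
  note [measurable] = True D
  have "integrable P (\<lambda>x. h x * indicator E x) \<and> integrable N (\<lambda>x. h x * indicator E x)"
    if [measurable]: "E \<in> sets borel" for E
  proof -
    have "(\<lambda>x. h x * indicator E x) \<in> borel_measurable borel" by measurable
    moreover have "\<bar>h x * indicator E x\<bar> \<le> c" if "x \<in> B" for x
      using bounded[OF that] abs_ge_zero[of "h x"] by (auto simp: indicator_def)
    ultimately show ?thesis using in_MB_integrable[OF MB] by blast
  qed
  note integrable = this[OF D] this[OF borel_comp[OF D]]
  have "(\<integral>x. h x \<partial>M) = (\<integral>x. h x * indicator D x \<partial>M) + (\<integral>x. h x * indicator (- D) x \<partial>M)"
    if "integrable M (\<lambda>x. h x * indicator D x)" "integrable M (\<lambda>x. h x * indicator (- D) x)" for M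
  proof -
    have "(\<integral>x. h x \<partial>M) = (\<integral>x. h x * indicator D x + h x * indicator (- D) x \<partial>M)"
      by (rule Bochner_Integration.integral_cong) (auto split: split_indicator)
    also have "\<dots> = (\<integral>x. h x * indicator D x \<partial>M) + (\<integral>x. h x * indicator (- D) x \<partial>M)"
      using that by (rule Bochner_Integration.integral_add)
    finally show ?thesis .
  qed
  then have "sint P N h
      = sint P N (\<lambda>x. h x * indicator D x) + sint P N (\<lambda>x. h x * indicator (- D) x)"
    using integrable by (simp add: sint_def)
  then show ?thesis using assms(5,6) by linarith
qed

definition coag_integrand ::
    "(real \<Rightarrow> real) \<Rightarrow> real set \<Rightarrow> (real \<Rightarrow> real \<Rightarrow> real) \<Rightarrow> real \<Rightarrow> real \<Rightarrow> real" where
  "coag_integrand f B K x y = (f (x + y) * indicator B (x + y) - f x - f y) * K x y"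

lemma LB_pair_zero:
  "LB_pair K \<phi> B f 0 P N l = 1/2 * sint2 P N (coag_integrand f B K) - l * sint P N (\<lambda>x. f x * \<phi> x)"
  unfolding LB_pair_def coag_integrand_def[abs_def] by (simp add: sint_def algebra_simps)

lemma abs_coag_integrand_le:
  assumes "\<And>z. \<bar>f z\<bar> \<le> 1"
  shows "\<bar>coag_integrand f B K x y\<bar> \<le> (2 + \<bar>f y\<bar>) * \<bar>K x y\<bar>"
proof -
  have "\<bar>f (x + y) * indicator B (x + y) - f x - f y\<bar> \<le> 2 + \<bar>f y\<bar>"
    using assms[of "x + y"] assms[of x] by (auto simp: indicator_def)
  then show ?thesis
    by (simp add: coag_integrand_def abs_mult mult_right_mono)
qed

lemma abs_sint_coag_integrand_le_tv_norm:
  assumes MB: "in_MB B P N" "B \<in> sets borel"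
    and f: "\<And>z. \<bar>f z\<bar> \<le> 1" and K: "\<And>x. x \<in> B \<Longrightarrow> \<bar>K x y\<bar> \<le> k" "0 \<le> k"
  shows "\<bar>sint P N (\<lambda>x. coag_integrand f B K x y)\<bar> \<le> 3 * k * tv_norm P N"
proof (rule abs_sint_le_scaled_variation_on[OF MB, of UNIV])
  fix x assume "x \<in> B"
  have "\<bar>coag_integrand f B K x y\<bar> \<le> (2 + \<bar>f y\<bar>) * \<bar>K x y\<bar>"
    by (rule abs_coag_integrand_le) (rule f)
  also have "\<dots> \<le> 3 * k"
    using f[of y] K(1)[OF \<open>x \<in> B\<close>] by (intro mult_mono) auto
  finally show "\<bar>coag_integrand f B K x y\<bar> \<le> 3 * k" .
qed (use K(2) in auto)

lemma abs_sint_coag_integrand_le_null_variation: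
  assumes MB: "in_MB B P N" "B \<in> sets borel"
    and f: "\<And>z. \<bar>f z\<bar> \<le> 1" "f y = 0" and K: "\<And>x. x \<in> B \<Longrightarrow> \<bar>K x y\<bar> \<le> k" "0 \<le> k"
    and G: "sets G = sets borel" and D: "D \<in> null_sets G" "\<And>x. x \<notin> D \<Longrightarrow> f x = 0"
    and outside_D: "AE x in P. x \<notin> D \<longrightarrow> f (x + y) = 0" "AE x in N. x \<notin> D \<longrightarrow> f (x + y) = 0"
  shows "\<bar>sint P N (\<lambda>x. coag_integrand f B K x y)\<bar> \<le> 2 * k * variation_on P N (null_sets G)"
proof -
  have "\<bar>sint P N (\<lambda>x. coag_integrand f B K x y)\<bar> \<le> 2 * k * variation_on P N (null_sets G) + 0"
  proof (rule abs_sint_le_split[OF MB])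
    show "D \<in> sets borel" using D(1) G by auto
    have bound: "\<bar>coag_integrand f B K x y\<bar> \<le> (2 + \<bar>f y\<bar>) * k" if "x \<in> B" for x
    proof -
      have "\<bar>coag_integrand f B K x y\<bar> \<le> (2 + \<bar>f y\<bar>) * \<bar>K x y\<bar>"
        by (rule abs_coag_integrand_le) (rule f(1))
      also have "\<dots> \<le> (2 + \<bar>f y\<bar>) * k" using K(1)[OF that] by (intro mult_left_mono) auto
      finally show ?thesis .
    qed
    then show "\<bar>coag_integrand f B K x y\<bar> \<le> 3 * k" if "x \<in> B" for x
      using bound[OF that] f(2) K(2) by simp
    show "\<bar>sint P N (\<lambda>x. coag_integrand f B K x y * indicator D x)\<bar>
        \<le> 2 * k * variation_on P N (null_sets G)"
      using bound f(2) K(2) D(1)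
      by (intro abs_sint_le_scaled_variation_on[OF MB, of D]) (auto simp: indicator_def)
    have "coag_integrand f B K x y * indicator (- D) x = 0" if "x \<notin> D \<longrightarrow> f (x + y) = 0" for x
      using that D(2)[of x] f(2) by (auto simp: coag_integrand_def indicator_def)
    then have "AE x in M. coag_integrand f B K x y * indicator (- D) x = 0"
      if "AE x in M. x \<notin> D \<longrightarrow> f (x + y) = 0" for M :: "real measure"
      using that by (auto elim!: eventually_mono)
    then show "\<bar>sint P N (\<lambda>x. coag_integrand f B K x y * indicator (- D) x)\<bar> \<le> 0"
      using outside_D by (simp add: sint_def integral_eq_zero_AE)
  qed (use K(2) variation_on_nonneg[OF MB(1), of "null_sets G"] D(1)
      in \<open>auto intro!: mult_nonneg_nonneg\<close>)
  then show ?thesis by simp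
qed

lemma abs_sint2_coag_integrand_le:
  fixes G :: "real measure"
  assumes G: "sets G = sets borel"
      "\<And>A. A \<in> null_sets G \<Longrightarrow> {y. {x. x + y \<in> A} \<notin> null_sets G} \<in> null_sets G"
    and MB: "in_MB B P N" "B \<in> sets borel"
    and K: "\<And>x y. x \<in> B \<Longrightarrow> y \<in> B \<Longrightarrow> \<bar>K x y\<bar> \<le> k" "0 \<le> k"
    and f: "\<And>x. \<bar>f x\<bar> \<le> 1" and A: "A \<in> null_sets G" "\<And>x. x \<notin> A \<Longrightarrow> f x = 0"
  shows "\<bar>sint2 P N (coag_integrand f B K)\<bar> \<le> 5 * k * tv_norm P N * variation_on P N (null_sets G)"
proof -
  define g where "g = variation_on P N (null_sets G)"
  have g: "0 \<le> g" unfolding g_def using variation_on_nonneg[OF MB(1)] A(1) by blast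
  have tv: "0 \<le> tv_norm P N" using variation_on_nonneg[OF MB(1)] by blast
  obtain DP where DP: "DP \<in> null_sets G" "\<And>E. E \<in> null_sets G \<Longrightarrow> E - DP \<in> null_sets P"
    using singular_support_exists[OF in_MB_finite_measure(1)[OF MB(1)]] G(1) in_MB_sets(1)[OF MB(1)]
    by metis
  obtain DN where DN: "DN \<in> null_sets G" "\<And>E. E \<in> null_sets G \<Longrightarrow> E - DN \<in> null_sets N"
    using singular_support_exists[OF in_MB_finite_measure(2)[OF MB(1)]] G(1) in_MB_sets(2)[OF MB(1)]
    by metis
  \<comment> \<open>For y outside D, f y = 0 and f (x + y) \<noteq> 0 forces x into the G-null set A - y,
    which P and N do not charge outside D.\<close>
  define D where "D = A \<union> DP \<union> DN \<union> {y. {x. x + y \<in> A} \<notin> null_sets G}"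
  have D: "D \<in> null_sets G" unfolding D_def using A(1) DP(1) DN(1) G(2)[OF A(1)] by blast
  define H where "H y = sint P N (\<lambda>x. coag_integrand f B K x y)" for y
  have H_tv: "\<bar>H y\<bar> \<le> 3 * k * tv_norm P N" if "y \<in> B" for y
    unfolding H_def using MB f K that by (intro abs_sint_coag_integrand_le_tv_norm) auto
  have H_null: "\<bar>H y\<bar> \<le> 2 * k * g" if "y \<in> B" "y \<notin> D" for y
  proof -
    define E where "E = {x. x + y \<in> A}"
    have E: "E \<in> null_sets G"
      using that(2) null_setsD2[OF A(1)] G(1) by (auto simp: D_def E_def)
    have outside_D: "AE x in M. x \<notin> D \<longrightarrow> f (x + y) = 0"
      if "E - D' \<in> null_sets M" "D' \<subseteq> D" for M D'
      using A(2) that(2) by (intro AE_I'[OF that(1)]) (auto simp: E_def)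
    show ?thesis
      unfolding H_def g_def
    proof (rule abs_sint_coag_integrand_le_null_variation[OF MB f _ _ K(2) G(1) D])
      show "AE x in P. x \<notin> D \<longrightarrow> f (x + y) = 0"
        by (rule outside_D[OF DP(2)[OF E]]) (auto simp: D_def)
      show "AE x in N. x \<notin> D \<longrightarrow> f (x + y) = 0"
        by (rule outside_D[OF DN(2)[OF E]]) (auto simp: D_def)
    qed (use that A(2) K(1) in \<open>auto simp: D_def\<close>)
  qed
  have "\<bar>sint P N H\<bar> \<le> 3 * k * tv_norm P N * g + 2 * k * g * tv_norm P N"
  proof (rule abs_sint_le_split[OF MB])
    show "D \<in> sets borel" using D G(1) by auto
    show "\<bar>sint P N (\<lambda>x. H x * indicator D x)\<bar> \<le> 3 * k * tv_norm P N * g"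
      unfolding g_def using H_tv tv K(2) D
      by (intro abs_sint_le_scaled_variation_on[OF MB, of D]) (auto simp: indicator_def)
    show "\<bar>sint P N (\<lambda>x. H x * indicator (- D) x)\<bar> \<le> 2 * k * g * tv_norm P N"
      using H_null g K(2)
      by (intro abs_sint_le_scaled_variation_on[OF MB, of UNIV]) (auto simp: indicator_def)
  qed (use H_tv g tv K(2) in auto)
  then show ?thesis
    by (simp add: sint2_def H_def[abs_def] g_def algebra_simps)
qed

lemma abs_LB_pair_le_null_variation:
  fixes G :: "real measure"
  assumes G: "sets G = sets borel"
      "\<And>A. A \<in> null_sets G \<Longrightarrow> {y. {x. x + y \<in> A} \<notin> null_sets G} \<in> null_sets G"
    and MB: "in_MB B P N" "B \<in> sets borel"
    and K: "\<And>x y. x \<in> B \<Longrightarrow> y \<in> B \<Longrightarrow> \<bar>K x y\<bar> \<le> \<Phi>\<^sup>2"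
    and \<phi>: "\<And>x. x \<in> B \<Longrightarrow> \<bar>\<phi> x\<bar> \<le> \<Phi>" "0 \<le> \<Phi>"
    and f: "\<And>x. \<bar>f x\<bar> \<le> 1" and A: "A \<in> null_sets G" "\<And>x. x \<notin> A \<Longrightarrow> f x = 0"
  shows "\<bar>LB_pair K \<phi> B f 0 P N l\<bar>
    \<le> (5/2 * \<Phi>\<^sup>2 * tv_norm P N + \<bar>l\<bar> * \<Phi>) * variation_on P N (null_sets G)"
proof -
  define g where "g = variation_on P N (null_sets G)"
  have linear: "\<bar>sint P N (\<lambda>x. f x * \<phi> x)\<bar> \<le> \<Phi> * g"
  proof (unfold g_def, rule abs_sint_le_scaled_variation_on[OF MB A(1)])
    show "\<bar>f x * \<phi> x\<bar> \<le> \<Phi>" if "x \<in> B" for x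
      using mult_mono[OF f[of x] \<phi>(1)[OF that]] by (simp add: abs_mult)
  qed (use A(2) \<phi>(2) in auto)
  have "\<bar>LB_pair K \<phi> B f 0 P N l\<bar>
      \<le> 1/2 * \<bar>sint2 P N (coag_integrand f B K)\<bar> + \<bar>l\<bar> * \<bar>sint P N (\<lambda>x. f x * \<phi> x)\<bar>"
    unfolding LB_pair_zero by (simp add: abs_mult abs_triangle_ineq4[THEN order_trans])
  also have "\<dots> \<le> 1/2 * (5 * \<Phi>\<^sup>2 * tv_norm P N * g) + \<bar>l\<bar> * (\<Phi> * g)"
    using abs_sint2_coag_integrand_le[OF G MB K _ f A] linear
    by (intro add_mono mult_left_mono) (auto simp: g_def)
  also have "\<dots> = (5/2 * \<Phi>\<^sup>2 * tv_norm P N + \<bar>l\<bar> * \<Phi>) * g"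
    by (simp add: algebra_simps)
  finally show ?thesis unfolding g_def .
qed

lemma bounded_above_on_compact:
  fixes h :: "real \<Rightarrow> real"
  assumes "compact S" "\<And>t. t \<in> S \<Longrightarrow> \<exists>\<delta>>0. \<forall>s\<in>S. \<bar>s - t\<bar> < \<delta> \<longrightarrow> h s \<le> h t + c"
  obtains M where "\<And>s. s \<in> S \<Longrightarrow> h s \<le> M"
proof -
  have "\<forall>t\<in>S. \<exists>\<delta>. \<delta> > 0 \<and> (\<forall>s\<in>S. \<bar>s - t\<bar> < \<delta> \<longrightarrow> h s \<le> h t + c)"
    using assms(2) by blast
  then obtain \<delta> where \<delta>: "\<forall>t\<in>S. \<delta> t > 0 \<and> (\<forall>s\<in>S. \<bar>s - t\<bar> < \<delta> t \<longrightarrow> h s \<le> h t + c)"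
    by (rule bchoice[THEN exE])
  have "S \<subseteq> (\<Union>t\<in>S. ball t (\<delta> t))" using \<delta> by force
  then obtain F where F: "F \<subseteq> S" "finite F" "S \<subseteq> (\<Union>t\<in>F. ball t (\<delta> t))"
    by (rule compactE_image[OF assms(1) open_ball])
  show ?thesis
  proof (rule that)
    fix s assume "s \<in> S"
    then obtain t where t: "t \<in> F" "\<bar>s - t\<bar> < \<delta> t"
      using F(3) by (force simp: dist_real_def abs_minus_commute)
    then have "h s \<le> h t + c" using \<delta> F(1) \<open>s \<in> S\<close> by blast
    also have "\<dots> \<le> (\<Sum>u\<in>F. \<bar>h u\<bar>) + \<bar>c\<bar>"
      using member_le_sum[OF t(1), of "\<lambda>u. \<bar>h u\<bar>"] F(2) by simp
    finally show "h s \<le> (\<Sum>u\<in>F. \<bar>h u\<bar>) + \<bar>c\<bar>" .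
  qed
qed

lemma tv_continuous_bounded:
  assumes "tv_continuous P N lam" "\<And>t. t \<ge> 0 \<Longrightarrow> in_MB B (P t) (N t)"
  obtains M where "\<And>s. s \<in> {0..T} \<Longrightarrow> tv_norm (P s) (N s) \<le> M \<and> \<bar>lam s\<bar> \<le> M"
proof -
  have "\<exists>\<delta>>0. \<forall>s\<in>{0..T}. \<bar>s - t\<bar> < \<delta> \<longrightarrow>
      tv_norm (P s) (N s) + \<bar>lam s\<bar> \<le> tv_norm (P t) (N t) + \<bar>lam t\<bar> + 2" if "t \<in> {0..T}" for t
  proof -
    have "0 \<le> t" using that by simp
    with assms(1) obtain \<delta> where \<delta>: "\<delta> > 0" "\<And>s. s \<ge> 0 \<Longrightarrow> \<bar>s - t\<bar> < \<delta> \<Longrightarrow> \<bar>lam s - lam t\<bar> < 1 \<and>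
        (\<forall>f \<in> borel_measurable borel. (\<forall>x. \<bar>f x\<bar> \<le> 1) \<longrightarrow>
            \<bar>sint (P s) (N s) f - sint (P t) (N t) f\<bar> \<le> 1)"
      unfolding tv_continuous_def by (elim allE[of _ t] impE allE[of _ 1]) auto
    have "tv_norm (P s) (N s) + \<bar>lam s\<bar> \<le> tv_norm (P t) (N t) + \<bar>lam t\<bar> + 2"
      if "s \<in> {0..T}" "\<bar>s - t\<bar> < \<delta>" for s
    proof -
      note close = \<delta>(2)[of s] that
      have "tv_norm (P s) (N s) \<le> tv_norm (P t) (N t) + 1"
      proof (rule variation_on_least)
        fix f :: "real \<Rightarrow> real" assume f: "f \<in> borel_measurable borel" "\<And>x. \<bar>f x\<bar> \<le> 1"
        have "\<bar>sint (P t) (N t) f\<bar> \<le> tv_norm (P t) (N t)"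
          using \<open>t \<in> {0..T}\<close> f assms(2) by (intro abs_sint_le_variation_on) auto
        then show "\<bar>sint (P s) (N s) f\<bar> \<le> tv_norm (P t) (N t) + 1"
          using close f by auto
      qed simp
      then show ?thesis using close by auto
    qed
    then show ?thesis using \<delta>(1) by blast
  qed
  then obtain M where M: "\<And>s. s \<in> {0..T} \<Longrightarrow> tv_norm (P s) (N s) + \<bar>lam s\<bar> \<le> M"
    by (rule bounded_above_on_compact[OF compact_Icc]) blast+
  show ?thesis
  proof (rule that)
    fix s assume s: "s \<in> {0..T}"
    have "0 \<le> tv_norm (P s) (N s)" using variation_on_nonneg[OF assms(2)] s by simp
    then show "tv_norm (P s) (N s) \<le> M \<and> \<bar>lam s\<bar> \<le> M" using M[OF s] by linarith
  qed
qed

lemma abs_set_integral_le_monomial: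
  fixes F :: "real \<Rightarrow> real"
  assumes "0 \<le> t" "0 \<le> a" "\<And>s. s \<in> {0..t} \<Longrightarrow> \<bar>F s\<bar> \<le> a * s ^ n"
  shows "\<bar>LINT s:{0..t}|lborel. F s\<bar> \<le> a * t ^ Suc n / Suc n"
proof (cases "integrable lborel (\<lambda>s. indicator {0..t} s *\<^sub>R F s)")
  case True
  have "integrable lborel (\<lambda>s. indicator {0..t} s *\<^sub>R s ^ n)"
    by (rule borel_integrable_compact) (auto intro!: continuous_intros)
  then have "\<bar>\<integral>s. indicator {0..t} s *\<^sub>R F s \<partial>lborel\<bar>
      \<le> (\<integral>s. a * (s ^ n * indicator {0..t} s) \<partial>lborel)"
    using True assms(3)
    by (intro integral_abs_bound_integral) (auto simp: indicator_def mult.commute)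
  also have "\<dots> = a * (t ^ Suc n / Suc n)"
    using integral_power[of 0 t n] assms(1) by simp
  finally show ?thesis by (simp add: set_lebesgue_integral_def)
next
  case False
  then show ?thesis
    using assms(1,2) by (simp add: set_lebesgue_integral_def not_integrable_integral_eq)
qed

lemma zero_by_gronwall_iteration:
  fixes g :: "real \<Rightarrow> real"
  assumes "0 \<le> T" "0 \<le> C" and bounded: "\<And>t. t \<in> {0..T} \<Longrightarrow> 0 \<le> g t \<and> g t \<le> M"
    and step: "\<And>t a n. t \<in> {0..T} \<Longrightarrow> 0 \<le> a \<Longrightarrow> (\<And>s. s \<in> {0..t} \<Longrightarrow> g s \<le> a * s ^ n) \<Longrightarrow>
      g t \<le> C * a * t ^ Suc n / Suc n"
  shows "g T = 0"
proof -
  have "0 \<le> M" using bounded[of T] assms(1) by auto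
  have iterate: "\<forall>t\<in>{0..T}. g t \<le> M * C ^ n / fact n * t ^ n" for n
  proof (induction n)
    case 0
    then show ?case using bounded by simp
  next
    case (Suc n)
    show ?case
    proof
      fix t assume t: "t \<in> {0..T}"
      have "g t \<le> C * (M * C ^ n / fact n) * t ^ Suc n / Suc n"
        using Suc.IH t \<open>0 \<le> M\<close> \<open>0 \<le> C\<close> by (intro step) auto
      then show "g t \<le> M * C ^ Suc n / fact (Suc n) * t ^ Suc n"
        by (simp add: field_simps)
    qed
  qed
  have "(\<lambda>n. M * (inverse (fact n) * (C * T) ^ n)) \<longlonglongrightarrow> M * 0"
    by (intro tendsto_mult tendsto_const summable_LIMSEQ_zero[OF summable_exp])
  moreover have "g T \<le> M * (inverse (fact n) * (C * T) ^ n)" for n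
  proof -
    have "g T \<le> M * C ^ n / fact n * T ^ n" using iterate[of n] assms(1) by simp
    also have "\<dots> = M * (inverse (fact n) * (C * T) ^ n)"
      by (simp add: field_simps power_mult_distrib)
    finally show ?thesis .
  qed
  ultimately have "g T \<le> 0"
    by (simp add: LIMSEQ_le_const)
  then show ?thesis using bounded[of T] assms(1) by simp
qed

lemma continuous_kernel_bounded_on_compact:
  fixes K :: "real \<Rightarrow> real \<Rightarrow> real"
  assumes "continuous_on {0<..} \<phi>" "compact B" "B \<subseteq> {0<..}"
    and "\<And>x y. x > 0 \<Longrightarrow> y > 0 \<Longrightarrow> K x y \<ge> 0" "\<And>x y. x > 0 \<Longrightarrow> y > 0 \<Longrightarrow> K x y \<le> \<phi> x * \<phi> y"
  obtains \<Phi> where "0 \<le> \<Phi>" "\<And>x. x \<in> B \<Longrightarrow> \<bar>\<phi> x\<bar> \<le> \<Phi>"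
    "\<And>x y. x \<in> B \<Longrightarrow> y \<in> B \<Longrightarrow> \<bar>K x y\<bar> \<le> \<Phi>\<^sup>2"
proof -
  have "compact (\<phi> ` B)"
    by (rule compact_continuous_image[OF continuous_on_subset[OF assms(1,3)] assms(2)])
  then have "bounded (\<phi> ` B)" by (rule compact_imp_bounded)
  then obtain \<Phi>0 where \<Phi>0: "\<forall>x\<in>B. \<bar>\<phi> x\<bar> \<le> \<Phi>0"
    by (auto simp: bounded_real)
  define \<Phi> where "\<Phi> = max \<Phi>0 0"
  have \<Phi>: "0 \<le> \<Phi>" "\<And>x. x \<in> B \<Longrightarrow> \<bar>\<phi> x\<bar> \<le> \<Phi>"
    using \<Phi>0 by (auto simp: \<Phi>_def)
  moreover have "\<bar>K x y\<bar> \<le> \<Phi>\<^sup>2" if "x \<in> B" "y \<in> B" for x y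
  proof -
    have pos: "x > 0" "y > 0" using that assms(3) by auto
    have "K x y \<le> \<bar>\<phi> x\<bar> * \<bar>\<phi> y\<bar>"
      using assms(5)[OF pos] abs_ge_self[of "\<phi> x * \<phi> y"] by (simp add: abs_mult)
    also have "\<dots> \<le> \<Phi>\<^sup>2"
      using \<Phi>(2)[OF that(1)] \<Phi>(2)[OF that(2)] by (simp add: power2_eq_square mult_mono)
    finally show ?thesis using assms(4)[OF pos] by simp
  qed
  ultimately show ?thesis using that by blast
qed

locale coagulation_solution =
  fixes K :: "real \<Rightarrow> real \<Rightarrow> real" and \<phi> :: "real \<Rightarrow> real" and B :: "real set"
    and m0 :: "real measure" and lam0 :: real
    and P N :: "real \<Rightarrow> real measure" and lam :: "real \<Rightarrow> real"
  assumes K_nonneg: "\<And>x y. x > 0 \<Longrightarrow> y > 0 \<Longrightarrow> K x y \<ge> 0"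
    and phi_cont: "continuous_on {0<..} \<phi>"
    and K_bound: "\<And>x y. x > 0 \<Longrightarrow> y > 0 \<Longrightarrow> K x y \<le> \<phi> x * \<phi> y"
    and B_compact: "compact B" and B_sub: "B \<subseteq> {0<..}"
    and m0_MB: "in_MB B m0 (null_measure borel)"
    and sol_MB: "\<And>t. t \<ge> 0 \<Longrightarrow> in_MB B (P t) (N t)"
    and sol_cont: "tv_continuous P N lam"
    and sol_eq: "\<And>t f a. t \<ge> 0 \<Longrightarrow> f \<in> borel_measurable borel \<Longrightarrow> bounded (range f) \<Longrightarrow>
        sint (P t) (N t) f + a * lam t
          = (\<integral>x. f x \<partial>m0) + a * lam0
            + (LINT s:{0..t}|lborel. LB_pair K \<phi> B f a (P s) (N s) (lam s))"
begin

definition null_variation :: "real \<Rightarrow> real" where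
  "null_variation t = variation_on (P t) (N t) (null_sets (gamma0 m0))"

lemma
  shows finite_measure_m0: "finite_measure m0" and sets_m0: "sets m0 = sets borel"
  using in_MB_finite_measure(1)[OF m0_MB] in_MB_sets(1)[OF m0_MB] .

lemma sint_eq_integral_LB_pair_if_null_support:
  assumes "0 \<le> t" "f \<in> borel_measurable borel" "\<And>x. \<bar>f x\<bar> \<le> 1"
    and "A \<in> null_sets (gamma0 m0)" "\<And>x. x \<notin> A \<Longrightarrow> f x = 0"
  shows "sint (P t) (N t) f = (LINT s:{0..t}|lborel. LB_pair K \<phi> B f 0 (P s) (N s) (lam s))"
proof -
  have "AE x in m0. x \<notin> A"
    using null_sets_gamma0_imp_null_sets[OF finite_measure_m0 sets_m0 assms(4)] by (rule AE_not_in)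
  then have "(\<integral>x. f x \<partial>m0) = 0"
    using assms(5) by (auto intro: integral_eq_zero_AE elim!: eventually_mono)
  moreover have "bounded (range f)" using assms(3) by (auto simp: bounded_real)
  ultimately show ?thesis using sol_eq[OF assms(1,2), of 0] by simp
qed

lemma LB_pair_le_null_variation:
  assumes "0 \<le> T"
  obtains C where "0 \<le> C" "\<And>s f A. s \<in> {0..T} \<Longrightarrow> f \<in> borel_measurable borel \<Longrightarrow> (\<And>x. \<bar>f x\<bar> \<le> 1) \<Longrightarrow>
      A \<in> null_sets (gamma0 m0) \<Longrightarrow> (\<And>x. x \<notin> A \<Longrightarrow> f x = 0) \<Longrightarrow>
      \<bar>LB_pair K \<phi> B f 0 (P s) (N s) (lam s)\<bar> \<le> C * null_variation s"
proof -
  obtain \<Phi> where \<Phi>: "0 \<le> \<Phi>" "\<And>x. x \<in> B \<Longrightarrow> \<bar>\<phi> x\<bar> \<le> \<Phi>"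
      "\<And>x y. x \<in> B \<Longrightarrow> y \<in> B \<Longrightarrow> \<bar>K x y\<bar> \<le> \<Phi>\<^sup>2"
    using continuous_kernel_bounded_on_compact[OF phi_cont B_compact B_sub K_nonneg K_bound]
    by blast
  obtain M where M: "\<And>s. s \<in> {0..T} \<Longrightarrow> tv_norm (P s) (N s) \<le> M \<and> \<bar>lam s\<bar> \<le> M"
    using tv_continuous_bounded[OF sol_cont sol_MB] by blast
  have "0 \<le> M" using M[of T] assms by auto
  show ?thesis
  proof (rule that[of "5/2 * \<Phi>\<^sup>2 * M + M * \<Phi>"])
    show "0 \<le> 5/2 * \<Phi>\<^sup>2 * M + M * \<Phi>" using \<open>0 \<le> M\<close> \<Phi>(1) by simp
    fix s and f :: "real \<Rightarrow> real" and A
    assume s: "s \<in> {0..T}" and f: "f \<in> borel_measurable borel" "\<And>x. \<bar>f x\<bar> \<le> 1"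
      and A: "A \<in> null_sets (gamma0 m0)" "\<And>x. x \<notin> A \<Longrightarrow> f x = 0"
    have MB: "in_MB B (P s) (N s)" using s by (intro sol_MB) simp
    have "\<bar>LB_pair K \<phi> B f 0 (P s) (N s) (lam s)\<bar>
        \<le> (5/2 * \<Phi>\<^sup>2 * tv_norm (P s) (N s) + \<bar>lam s\<bar> * \<Phi>) * null_variation s"
      unfolding null_variation_def
    proof (rule abs_LB_pair_le_null_variation
        [OF sets_gamma0 null_sets_gamma0_translate MB _ \<Phi>(3,2,1) f(2) A])
      show "B \<in> sets borel" using B_compact by (simp add: compact_imp_closed)
    qed (use finite_measure_m0 sets_m0 in auto)
    also have "\<dots> \<le> (5/2 * \<Phi>\<^sup>2 * M + M * \<Phi>) * null_variation s"
      using M[OF s] \<Phi>(1) variation_on_nonneg[OF MB, of "null_sets (gamma0 m0)"] A(1)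
      by (intro mult_right_mono add_mono mult_left_mono) (auto simp: null_variation_def)
    finally show "\<bar>LB_pair K \<phi> B f 0 (P s) (N s) (lam s)\<bar>
      \<le> (5/2 * \<Phi>\<^sup>2 * M + M * \<Phi>) * null_variation s" .
  qed
qed

lemma null_variation_eq_zero:
  assumes "0 \<le> T"
  shows "null_variation T = 0"
proof -
  obtain C where C: "0 \<le> C" "\<And>s f A. s \<in> {0..T} \<Longrightarrow> f \<in> borel_measurable borel \<Longrightarrow> (\<And>x. \<bar>f x\<bar> \<le> 1) \<Longrightarrow>
      A \<in> null_sets (gamma0 m0) \<Longrightarrow> (\<And>x. x \<notin> A \<Longrightarrow> f x = 0) \<Longrightarrow>
      \<bar>LB_pair K \<phi> B f 0 (P s) (N s) (lam s)\<bar> \<le> C * null_variation s"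
    using LB_pair_le_null_variation[OF assms] by blast
  obtain M where M: "\<And>s. s \<in> {0..T} \<Longrightarrow> tv_norm (P s) (N s) \<le> M \<and> \<bar>lam s\<bar> \<le> M"
    using tv_continuous_bounded[OF sol_cont sol_MB] by blast
  show ?thesis
  proof (rule zero_by_gronwall_iteration[OF assms C(1)])
    show "0 \<le> null_variation t \<and> null_variation t \<le> M" if "t \<in> {0..T}" for t
    proof -
      have MB: "in_MB B (P t) (N t)" using that by (intro sol_MB) simp
      have "{} \<in> null_sets (gamma0 m0)" by auto
      then have ne: "null_sets (gamma0 m0) \<noteq> {}" by blast
      show ?thesis
        using variation_on_nonneg[OF MB ne] variation_on_le_tv_norm[OF MB ne] M[OF that]
        unfolding null_variation_def by linarith
    qed
    fix t a n assume t: "t \<in> {0..T}" "0 \<le> a"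
      and IH: "\<And>s. s \<in> {0..t} \<Longrightarrow> null_variation s \<le> a * s ^ n"
    show "null_variation t \<le> C * a * t ^ Suc n / Suc n"
      unfolding null_variation_def
    proof (rule variation_on_least)
      fix f :: "real \<Rightarrow> real" and A assume f: "f \<in> borel_measurable borel" "\<And>x. \<bar>f x\<bar> \<le> 1"
        and A: "A \<in> null_sets (gamma0 m0)" "\<And>x. x \<notin> A \<Longrightarrow> f x = 0"
      have "\<bar>LINT s:{0..t}|lborel. LB_pair K \<phi> B f 0 (P s) (N s) (lam s)\<bar>
          \<le> C * a * t ^ Suc n / Suc n"
      proof (rule abs_set_integral_le_monomial)
        fix s assume s: "s \<in> {0..t}"
        have "\<bar>LB_pair K \<phi> B f 0 (P s) (N s) (lam s)\<bar> \<le> C * null_variation s"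
          using s t f A by (intro C(2)) auto
        also have "\<dots> \<le> C * a * s ^ n" using IH[OF s] C(1) by (simp add: mult_left_mono mult.assoc)
        finally show "\<bar>LB_pair K \<phi> B f 0 (P s) (N s) (lam s)\<bar> \<le> C * a * s ^ n" .
      qed (use t C(1) in auto)
      then show "\<bar>sint (P t) (N t) f\<bar> \<le> C * a * t ^ Suc n / Suc n"
        using t f A by (simp add: sint_eq_integral_LB_pair_if_null_support)
    qed auto
  qed
qed

theorem signed_abs_cont_solution:
  assumes "0 \<le> t"
  shows "signed_abs_cont (gamma0 m0) (P t) (N t)"
  using sol_MB[OF assms] sets_gamma0 null_variation_eq_zero[OF assms]
  unfolding null_variation_def by (rule signed_abs_cont_if_null_variation_zero)

end

theorem mainTheorem4:
  fixes K :: "real \<Rightarrow> real \<Rightarrow> real" and \<phi> :: "real \<Rightarrow> real" and B :: "real set"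
    and m0 :: "real measure" and lam0 :: real
    and P N :: "real \<Rightarrow> real measure" and lam :: "real \<Rightarrow> real"
  assumes K_nonneg: "\<And>x y. x > 0 \<Longrightarrow> y > 0 \<Longrightarrow> K x y \<ge> 0"
    and K_sym: "\<And>x y. x > 0 \<Longrightarrow> y > 0 \<Longrightarrow> K x y = K y x"
    and K_meas: "(\<lambda>(x, y). K x y) \<in> borel_measurable (restrict_space borel ({0<..} \<times> {0<..}))"
    and phi_pos: "\<And>x. x > 0 \<Longrightarrow> \<phi> x > 0"
    and phi_cont: "continuous_on {0<..} \<phi>"
    and phi_sublin: "\<And>x l. x > 0 \<Longrightarrow> l \<ge> 1 \<Longrightarrow> \<phi> (l * x) \<le> l * \<phi> x"
    and K_bound: "\<And>x y. x > 0 \<Longrightarrow> y > 0 \<Longrightarrow> K x y \<le> \<phi> x * \<phi> y"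
    and B_compact: "compact B" and B_sub: "B \<subseteq> {0<..}"
    and m0_MB: "in_MB B m0 (null_measure borel)"
    and lam0_nonneg: "lam0 \<ge> 0"
    and sol_MB: "\<And>t. t \<ge> 0 \<Longrightarrow> in_MB B (P t) (N t)"
    and sol_cont: "tv_continuous P N lam"
    and sol_eq: "\<And>t f a. t \<ge> 0 \<Longrightarrow> f \<in> borel_measurable borel \<Longrightarrow> bounded (range f) \<Longrightarrow>
        sint (P t) (N t) f + a * lam t
          = (\<integral>x. f x \<partial>m0) + a * lam0
            + (LINT s:{0..t}|lborel. LB_pair K \<phi> B f a (P s) (N s) (lam s))"
  shows "\<forall>t\<ge>0. signed_abs_cont (gamma0 m0) (P t) (N t)"
proof (intro allI impI)
  interpret coagulation_solution K \<phi> B m0 lam0 P N lam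
    using K_nonneg phi_cont K_bound B_compact B_sub m0_MB sol_MB sol_cont sol_eq
    by unfold_locales
  show "signed_abs_cont (gamma0 m0) (P t) (N t)" if "0 \<le> t" for t
    using that by (rule signed_abs_cont_solution)
qed

end
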